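(* Let $G=(V,E)$ be a hypergraph and $\emptyset\neq R\subsetneq U\subsetneq V$. Let $S=\{u_1,\dots,u_p\}\subseteq U\setminus R$ with $p\ge 2$. For each $i\in[p]$ let $(\overline{A_i},A_i)$ be a minimum $((S\cup R)\setminus\{u_i\},\overline U)$-terminal cut, and suppose $u_i\in A_i\setminus\bigl(\bigcup_{j\in[p]\setminus\{i\}}A_j\bigr)$ for every $i\in[p]$. Let \[Z:=\bigcap_{i=1}^p\overline{A_i},\quad W:=\bigcup_{1\le i<j\le p}(A_i\cap A_j),\quad Y_i:=A_i\setminus W\ \ \forall i\in[p].\] Then $(Y_1,\dots,Y_p,W,Z)$ is a $(p+2)$-partition of $V$ with \[\sigma(Y_1,\dots,Y_p,W,Z)\le\min\{d(A_i)+d(A_j): i,j\in[p],\ i\ne j\}.\]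
   Context: A hypergraph $G=(V,E)$ has finite vertex set $V$ and finite multiset $E$ of hyperedges (subsets of $V$). For $X\subseteq V$, $\overline X=V\setminus X$ and $d(X)$ is the number of hyperedges meeting both $X$ and $\overline X$. For disjoint $S',T'\subseteq V$, a 2-partition $(X,\overline X)$ is an $(S',T')$-terminal cut if $S'\subseteq X\subseteq V\setminus T'$, and it is minimum if $d(X)$ is minimum among such cuts. For a partition $(Y_1,\dots,Y_p,W,Z)$ of $V$: $\mathrm{cost}(Y_1,\dots,Y_p,W,Z)$ is the number of hyperedges meeting at least two parts; $\mathrm{cost}(W,Z)$ is the number of hyperedges $e\subseteq W\cup Z$ meeting both $W$ and $Z$; $\alpha(Y_1,\dots,Y_p,W,Z)$ is the number of hyperedges meeting $Z$ and at least two of $Y_1,\dots,Y_p,W$; $\beta(Y_1,\dots,Y_p,Z)$ is the number of hyperedges disjoint from $Z$ meeting at least two of $Y_1,\dots,Y_p$; $\sigma:=\mathrm{cost}(Y_1,\dots,Y_p,W,Z)+\mathrm{cost}(W,Z)+\alpha+\beta$. *)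

theory Defs
  imports Main "HOL-Library.Multiset"
begin

text \<open>A hypergraph is a finite vertex set V together with a multiset E of hyperedges
  (subsets of V).  Sets X are cut sides; the complement is taken inside V.\<close>

definition hdeg :: "'a set \<Rightarrow> 'a set multiset \<Rightarrow> 'a set \<Rightarrow> nat" where
  "hdeg V E X = size {# e \<in># E. e \<inter> X \<noteq> {} \<and> e \<inter> (V - X) \<noteq> {} #}"

definition terminal_cut :: "'a set \<Rightarrow> 'a set \<Rightarrow> 'a set \<Rightarrow> 'a set \<Rightarrow> bool" where
  "terminal_cut V S' T' X \<longleftrightarrow> S' \<subseteq> X \<and> X \<subseteq> V - T'"

definition min_terminal_cut ::
  "'a set \<Rightarrow> 'a set multiset \<Rightarrow> 'a set \<Rightarrow> 'a set \<Rightarrow> 'a set \<Rightarrow> bool" where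
  "min_terminal_cut V E S' T' X \<longleftrightarrow> terminal_cut V S' T' X \<and>
     (\<forall>X'. terminal_cut V S' T' X' \<longrightarrow> hdeg V E X \<le> hdeg V E X')"

definition parts_met :: "'a set \<Rightarrow> 'a set list \<Rightarrow> nat" where
  "parts_met e Ps = length (filter (\<lambda>P. e \<inter> P \<noteq> {}) Ps)"

definition cost :: "'a set multiset \<Rightarrow> 'a set list \<Rightarrow> nat" where
  "cost E Ps = size {# e \<in># E. parts_met e Ps \<ge> 2 #}"

definition cost_WZ :: "'a set multiset \<Rightarrow> 'a set \<Rightarrow> 'a set \<Rightarrow> nat" where
  "cost_WZ E W Z = size {# e \<in># E. e \<subseteq> W \<union> Z \<and> e \<inter> W \<noteq> {} \<and> e \<inter> Z \<noteq> {} #}"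

definition alpha :: "'a set multiset \<Rightarrow> 'a set list \<Rightarrow> 'a set \<Rightarrow> 'a set \<Rightarrow> nat" where
  "alpha E Ys W Z = size {# e \<in># E. e \<inter> Z \<noteq> {} \<and> parts_met e (Ys @ [W]) \<ge> 2 #}"

definition beta :: "'a set multiset \<Rightarrow> 'a set list \<Rightarrow> 'a set \<Rightarrow> nat" where
  "beta E Ys Z = size {# e \<in># E. e \<inter> Z = {} \<and> parts_met e Ys \<ge> 2 #}"

definition sigma :: "'a set multiset \<Rightarrow> 'a set list \<Rightarrow> 'a set \<Rightarrow> 'a set \<Rightarrow> nat" where
  "sigma E Ys W Z = cost E (Ys @ [W, Z]) + cost_WZ E W Z + alpha E Ys W Z + beta E Ys Z"

end

theory Submission
  imports Defs
begin

text \<open>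
  For an index set J, classify each vertex v by its owners, the indices l \<in> J with v \<in> A l:
  v lies in Z if it has no owner, in Y l if l is its only owner, and in W if it has at least two.
  Each summand of \<sigma> counts a hyperedge according to the classes it meets, so \<sigma> is a sum over
  the hyperedges of a weight depending only on the set of owner sets of the vertices of the edge.
  Removing an index k from J decreases the weight of an edge e by at most
  [e crosses A k] - [e crosses B], where B = A k \<inter> W(J - {k}) are the vertices of A k that keep
  two owners.  If two indices i, j \<noteq> k remain, then V - U \<subseteq> A i \<inter> A j \<inter> A k \<subseteq> B \<subseteq> A k, so the
  minimality of the cut gives d(A k) \<le> d(B): removing k does not decrease the total weight.
  Removing all indices but i and j, and then i and j themselves, bounds \<sigma> by d(A i) + d(A j).
\<close>

text \<open>
  The contribution of one hyperedge to \<sigma>, given the number c of classes Y l it meets and whether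
  it meets W and Z; the four summands come from cost, cost(W, Z), \<alpha> and \<beta>.
\<close>
definition sigma_weight :: "nat \<Rightarrow> bool \<Rightarrow> bool \<Rightarrow> nat" where
  "sigma_weight c w z =
     of_bool (2 \<le> c + of_bool w + of_bool z) + of_bool (c = 0 \<and> w \<and> z)
     + of_bool (z \<and> 2 \<le> c + of_bool w) + of_bool (\<not> z \<and> 2 \<le> c)"

text \<open>
  Removing index k, for one edge: before removal the edge meets n1 classes Y l with l \<noteq> k, meets
  Y k iff yk, Z iff z, W - A k iff wo and A k \<inter> W(J - {k}) iff wk, and n2 counts the l such
  that it meets the vertices owned by exactly k and l.  After removal Y k joins Z, those vertices
  join Y l (so the edge meets n classes Y l), and W shrinks to its parts W - A k and A k \<inter> W(J - {k}).
\<close>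
lemma sigma_weight_remove_index:
  fixes n1 n2 n :: nat
  assumes "n1 \<le> n" "n2 \<le> n" "n \<le> n1 + n2"
  shows "sigma_weight (n1 + of_bool yk) (wo \<or> 0 < n2 \<or> wk) z
           + of_bool (wk \<and> (z \<or> yk \<or> 0 < n1 \<or> wo \<or> 0 < n2))
         \<le> sigma_weight n (wo \<or> wk) (z \<or> yk)
           + of_bool ((yk \<or> 0 < n2 \<or> wk) \<and> (z \<or> 0 < n1 \<or> wo))"
  using assms by (cases z; cases yk; cases wo; cases wk) (auto simp: sigma_weight_def)

lemma finite_set_cases_by_card_mem:
  assumes "finite M"
  obtains "M = {}" | "M = {k}" | l where "l \<noteq> k" "M = {l}" | "k \<notin> M" "2 \<le> card M"
    | l where "l \<noteq> k" "M = {k, l}" | "k \<in> M" "3 \<le> card M"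
proof -
  consider "card M = 0" | "card M = 1" | "card M = 2" | "card M \<ge> 3" by linarith
  then show ?thesis
  proof cases
    case 1 then show ?thesis using assms that by simp
  next
    case 2 then show ?thesis using that by (auto simp: card_1_singleton_iff)
  next
    case 3 then obtain x y where "M = {x,y}" "x \<noteq> y" by (auto simp: card_2_iff)
    then show ?thesis using 3 that by (cases "x = k"; cases "y = k") (auto simp: insert_commute)
  next
    case 4 then show ?thesis using that by auto
  qed
qed

lemma bex_card_ge_2_cases:
  assumes "\<forall>M\<in>P. finite M"
  shows "(\<exists>M\<in>P. 2 \<le> card M) \<longleftrightarrow> (\<exists>M\<in>P. k \<notin> M \<and> 2 \<le> card M)
           \<or> (\<exists>l. l \<noteq> k \<and> {k, l} \<in> P) \<or> (\<exists>M\<in>P. k \<in> M \<and> 3 \<le> card M)"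
proof
  assume "\<exists>M\<in>P. 2 \<le> card M"
  then obtain M where M: "M \<in> P" "2 \<le> card M" by blast
  from M(1) assms have "finite M" by blast
  then show "(\<exists>M\<in>P. k \<notin> M \<and> 2 \<le> card M)
           \<or> (\<exists>l. l \<noteq> k \<and> {k, l} \<in> P) \<or> (\<exists>M\<in>P. k \<in> M \<and> 3 \<le> card M)"
    using M by (cases rule: finite_set_cases_by_card_mem[where k = k]) auto
next
  assume "(\<exists>M\<in>P. k \<notin> M \<and> 2 \<le> card M)
           \<or> (\<exists>l. l \<noteq> k \<and> {k, l} \<in> P) \<or> (\<exists>M\<in>P. k \<in> M \<and> 3 \<le> card M)"
  then show "\<exists>M\<in>P. 2 \<le> card M"
  proof (elim disjE)
    assume "\<exists>l. l \<noteq> k \<and> {k, l} \<in> P"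
    then obtain l where "l \<noteq> k" "{k, l} \<in> P" by blast
    then show ?thesis by (intro bexI[of _ "{k, l}"]) auto
  next
    assume "\<exists>M\<in>P. k \<in> M \<and> 3 \<le> card M"
    then obtain M where "M \<in> P" "3 \<le> card M" by blast
    then show ?thesis by (intro bexI[of _ M]) auto
  qed blast
qed

lemma bex_mem_cases:
  assumes "\<forall>M\<in>P. finite M"
  shows "(\<exists>M\<in>P. k \<in> M) \<longleftrightarrow>
           {k} \<in> P \<or> (\<exists>l. l \<noteq> k \<and> {k, l} \<in> P) \<or> (\<exists>M\<in>P. k \<in> M \<and> 3 \<le> card M)"
proof
  assume "\<exists>M\<in>P. k \<in> M"
  then obtain M where M: "M \<in> P" "k \<in> M" by blast
  from M(1) assms have "finite M" by blast
  then show "{k} \<in> P \<or> (\<exists>l. l \<noteq> k \<and> {k, l} \<in> P) \<or> (\<exists>M\<in>P. k \<in> M \<and> 3 \<le> card M)"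
    using M by (cases rule: finite_set_cases_by_card_mem[where k = k]) auto
qed auto

lemma bex_not_mem_cases:
  assumes "\<forall>M\<in>P. finite M"
  shows "(\<exists>M\<in>P. k \<notin> M) \<longleftrightarrow>
           {} \<in> P \<or> (\<exists>l. l \<noteq> k \<and> {l} \<in> P) \<or> (\<exists>M\<in>P. k \<notin> M \<and> 2 \<le> card M)"
proof
  assume "\<exists>M\<in>P. k \<notin> M"
  then obtain M where M: "M \<in> P" "k \<notin> M" by blast
  from M(1) assms have "finite M" by blast
  then show "{} \<in> P \<or> (\<exists>l. l \<noteq> k \<and> {l} \<in> P) \<or> (\<exists>M\<in>P. k \<notin> M \<and> 2 \<le> card M)"
    using M by (cases rule: finite_set_cases_by_card_mem[where k = k]) auto
qed auto

lemma bex_not_mem_card_ge_3_cases: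
  assumes "\<forall>M\<in>P. finite M"
  shows "(\<exists>M\<in>P. \<not> (k \<in> M \<and> 3 \<le> card M)) \<longleftrightarrow>
           (\<exists>M\<in>P. k \<notin> M) \<or> {k} \<in> P \<or> (\<exists>l. l \<noteq> k \<and> {k, l} \<in> P)"
proof
  assume "\<exists>M\<in>P. \<not> (k \<in> M \<and> 3 \<le> card M)"
  then obtain M where M: "M \<in> P" "\<not> (k \<in> M \<and> 3 \<le> card M)" by blast
  from M(1) assms have "finite M" by blast
  then show "(\<exists>M\<in>P. k \<notin> M) \<or> {k} \<in> P \<or> (\<exists>l. l \<noteq> k \<and> {k, l} \<in> P)"
    using M by (cases rule: finite_set_cases_by_card_mem[where k = k]) auto
next
  have "\<not> 3 \<le> card {k}" "\<not> 3 \<le> card {k, l}" for l by (simp_all add: card_insert_if)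
  then show "(\<exists>M\<in>P. k \<notin> M) \<or> {k} \<in> P \<or> (\<exists>l. l \<noteq> k \<and> {k, l} \<in> P)
      \<Longrightarrow> \<exists>M\<in>P. \<not> (k \<in> M \<and> 3 \<le> card M)"
    by blast
qed

lemma empty_in_image_Diff_singleton:
  "{} \<in> (\<lambda>M. M - {k}) ` P \<longleftrightarrow> {} \<in> P \<or> {k} \<in> P"
  by (auto simp: image_iff Diff_eq_empty_iff subset_singleton_iff)

lemma singleton_in_image_Diff_singleton:
  "{l} \<in> (\<lambda>M. M - {k}) ` P \<longleftrightarrow> l \<noteq> k \<and> ({l} \<in> P \<or> {k, l} \<in> P)"
proof -
  have "M - {k} = {l} \<longleftrightarrow> l \<noteq> k \<and> (M = {l} \<or> M = {k, l})" for M
    by (cases "k \<in> M") (auto simp: insert_Diff_if)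
  then show ?thesis unfolding image_iff by (metis (no_types, lifting))
qed

lemma bex_card_ge_2_image_Diff_singleton:
  assumes "\<forall>M\<in>P. finite M"
  shows "(\<exists>M\<in>(\<lambda>M. M - {k}) ` P. 2 \<le> card M)
           \<longleftrightarrow> (\<exists>M\<in>P. k \<notin> M \<and> 2 \<le> card M) \<or> (\<exists>M\<in>P. k \<in> M \<and> 3 \<le> card M)"
proof -
  have "2 \<le> card (M - {k}) \<longleftrightarrow> (k \<notin> M \<and> 2 \<le> card M) \<or> (k \<in> M \<and> 3 \<le> card M)"
    if "M \<in> P" for M
    using assms that by (cases "k \<in> M") (auto simp: card_Diff_singleton)
  then show ?thesis by auto
qed

text \<open>A profile P is the set of owner sets of the vertices of an edge.\<close>
definition profile_weight :: "nat set set \<Rightarrow> nat" where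
  "profile_weight P = sigma_weight (card {l. {l} \<in> P}) (\<exists>M\<in>P. 2 \<le> card M) ({} \<in> P)"

definition splits :: "nat set set \<Rightarrow> (nat set \<Rightarrow> bool) \<Rightarrow> bool" where
  "splits P Q \<longleftrightarrow> (\<exists>M\<in>P. Q M) \<and> (\<exists>M\<in>P. \<not> Q M)"

lemma profile_weight_remove_index:
  assumes "finite J" "P \<subseteq> Pow J"
  shows "profile_weight P + of_bool (splits P (\<lambda>M. k \<in> M \<and> 3 \<le> card M))
         \<le> profile_weight ((\<lambda>M. M - {k}) ` P) + of_bool (splits P (\<lambda>M. k \<in> M))"
proof -
  have fin: "\<forall>M\<in>P. finite M" using assms finite_subset by blast
  define Single where "Single = {l. {l} \<in> P} - {k}"
  define Paired where "Paired = {l. l \<noteq> k \<and> {k, l} \<in> P}"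
  have "finite Single" "finite Paired"
    using assms by (auto simp: Single_def Paired_def intro: finite_subset[of _ J])
  have "{l. {l} \<in> P} = (if {k} \<in> P then insert k Single else Single)" "k \<notin> Single"
    by (auto simp: Single_def)
  then have "card {l. {l} \<in> P} = card Single + of_bool ({k} \<in> P)"
    using \<open>finite Single\<close> by simp
  moreover have "{l. {l} \<in> (\<lambda>M. M - {k}) ` P} = Single \<union> Paired"
    by (auto simp: Single_def Paired_def singleton_in_image_Diff_singleton)
  moreover have "(\<exists>l. l \<noteq> k \<and> {l} \<in> P) \<longleftrightarrow> 0 < card Single"
    and "(\<exists>l. l \<noteq> k \<and> {k, l} \<in> P) \<longleftrightarrow> 0 < card Paired"
    using \<open>finite Single\<close> \<open>finite Paired\<close> by (auto simp: Single_def Paired_def card_gt_0_iff)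
  moreover have "card Single \<le> card (Single \<union> Paired)" "card Paired \<le> card (Single \<union> Paired)"
    "card (Single \<union> Paired) \<le> card Single + card Paired"
    using \<open>finite Single\<close> \<open>finite Paired\<close> by (auto simp: card_mono card_Un_le)
  ultimately show ?thesis
    using sigma_weight_remove_index[of "card Single" "card (Single \<union> Paired)" "card Paired" "{k} \<in> P"
        "\<exists>M\<in>P. k \<notin> M \<and> 2 \<le> card M" "\<exists>M\<in>P. k \<in> M \<and> 3 \<le> card M" "{} \<in> P"]
    unfolding profile_weight_def splits_def bex_card_ge_2_image_Diff_singleton[OF fin]
      bex_card_ge_2_cases[OF fin, of k] bex_mem_cases[OF fin] bex_not_mem_card_ge_3_cases[OF fin]
      bex_not_mem_cases[OF fin] empty_in_image_Diff_singleton
    by (smt (verit))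
qed

text \<open>
  With respect to the index set J, a vertex v lies in the class Z, Y l or W of the paper according
  as owners A J v is empty, equal to {l}, or of size at least two; overlap A J is W.
\<close>
definition owners :: "(nat \<Rightarrow> 'a set) \<Rightarrow> nat set \<Rightarrow> 'a \<Rightarrow> nat set" where
  "owners A J v = {l \<in> J. v \<in> A l}"

definition overlap :: "(nat \<Rightarrow> 'a set) \<Rightarrow> nat set \<Rightarrow> 'a set" where
  "overlap A J = {v. 2 \<le> card (owners A J v)}"

definition crosses :: "'a set \<Rightarrow> 'a set \<Rightarrow> bool" where
  "crosses e X \<longleftrightarrow> e \<inter> X \<noteq> {} \<and> e - X \<noteq> {}"

lemma owners_subset: "owners A J v \<subseteq> J"
  by (auto simp: owners_def)

lemma finite_owners: "finite J \<Longrightarrow> finite (owners A J v)"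
  by (simp add: owners_def)

lemma owners_Diff_singleton: "owners A (J - {k}) v = owners A J v - {k}"
  by (auto simp: owners_def)

lemma profile_weight_owners_remove_index:
  assumes "finite J" "k \<in> J"
  shows "profile_weight (owners A J ` e) + of_bool (crosses e (A k \<inter> overlap A (J - {k})))
         \<le> profile_weight (owners A (J - {k}) ` e) + of_bool (crosses e (A k))"
proof -
  have "finite (owners A J v)" "v \<in> A k \<longleftrightarrow> k \<in> owners A J v" for v
    using assms by (auto simp: owners_def finite_owners)
  then have "A k = {v. k \<in> owners A J v}"
    and "A k \<inter> overlap A (J - {k}) = {v. k \<in> owners A J v \<and> 3 \<le> card (owners A J v)}"
    by (auto simp: overlap_def owners_Diff_singleton card_Diff_singleton_if)
  then have crosses_A: "crosses e (A k) = splits (owners A J ` e) (\<lambda>M. k \<in> M)"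
    and crosses_B: "crosses e (A k \<inter> overlap A (J - {k})) = splits (owners A J ` e) (\<lambda>M. k \<in> M \<and> 3 \<le> card M)"
    by (auto simp: crosses_def splits_def)
  have "owners A (J - {k}) ` e = (\<lambda>M. M - {k}) ` owners A J ` e"
    by (auto simp: owners_Diff_singleton)
  moreover have "owners A J ` e \<subseteq> Pow J"
    by (simp add: image_subset_iff owners_subset)
  ultimately show ?thesis
    using profile_weight_remove_index[OF \<open>finite J\<close>, of "owners A J ` e" k]
    unfolding crosses_A crosses_B by simp
qed

lemma size_filter_mset_eq_sum_of_bool: "size (filter_mset P M) = (\<Sum>x\<in>#M. of_bool (P x))"
  by (induction M) auto

lemma hdeg_eq_sum_crosses:
  assumes "\<forall>e\<in>#E. e \<subseteq> V"
  shows "hdeg V E X = (\<Sum>e\<in>#E. of_bool (crosses e X))"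
proof -
  have "e \<inter> (V - X) = e - X" if "e \<in># E" for e
    using assms that by blast
  then show ?thesis
    unfolding hdeg_def size_filter_mset_eq_sum_of_bool crosses_def
    by (intro arg_cong[where f = sum_mset] image_mset_cong) simp
qed

lemma sum_profile_weight_remove_index:
  assumes edges: "\<forall>e\<in>#E. e \<subseteq> V" and "finite J" "k \<in> J"
    and "i \<in> J - {k}" "j \<in> J - {k}" "i \<noteq> j" "T \<subseteq> A i" "T \<subseteq> A j" "T \<subseteq> A k"
    and minimal: "\<And>B. T \<subseteq> B \<Longrightarrow> B \<subseteq> A k \<Longrightarrow> hdeg V E (A k) \<le> hdeg V E B"
  shows "(\<Sum>e\<in>#E. profile_weight (owners A J ` e)) \<le> (\<Sum>e\<in>#E. profile_weight (owners A (J - {k}) ` e))"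
proof -
  have "T \<subseteq> overlap A (J - {k})"
  proof
    fix v assume "v \<in> T"
    then have "{i, j} \<subseteq> owners A (J - {k}) v"
      using assms by (auto simp: owners_def)
    moreover have "finite (owners A (J - {k}) v)"
      using \<open>finite J\<close> by (simp add: finite_owners)
    ultimately have "card {i, j} \<le> card (owners A (J - {k}) v)"
      by (rule card_mono[rotated])
    then show "v \<in> overlap A (J - {k})"
      using \<open>i \<noteq> j\<close> by (simp add: overlap_def)
  qed
  then have "hdeg V E (A k) \<le> hdeg V E (A k \<inter> overlap A (J - {k}))"
    using minimal \<open>T \<subseteq> A k\<close> by simp
  moreover have "(\<Sum>e\<in>#E. profile_weight (owners A J ` e)) + hdeg V E (A k \<inter> overlap A (J - {k}))
      \<le> (\<Sum>e\<in>#E. profile_weight (owners A (J - {k}) ` e)) + hdeg V E (A k)"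
    unfolding hdeg_eq_sum_crosses[OF edges] sum_mset.distrib[symmetric]
    by (rule sum_mset_mono) (rule profile_weight_owners_remove_index[OF \<open>finite J\<close> \<open>k \<in> J\<close>])
  ultimately show ?thesis by linarith
qed

lemma profile_weight_owners_empty: "profile_weight (owners A {} ` e) = 0"
proof -
  have "{l. {l} \<in> owners A {} ` e} = {}" "\<not> (\<exists>M\<in>owners A {} ` e. 2 \<le> card M)"
    by (auto simp: owners_def)
  then show ?thesis
    by (simp add: profile_weight_def sigma_weight_def)
qed

lemma sum_profile_weight_pair_le:
  assumes edges: "\<forall>e\<in>#E. e \<subseteq> V" and "i \<noteq> j"
  shows "(\<Sum>e\<in>#E. profile_weight (owners A {i, j} ` e)) \<le> hdeg V E (A i) + hdeg V E (A j)"
proof -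
  have "profile_weight (owners A {i, j} ` e) \<le> of_bool (crosses e (A i)) + of_bool (crosses e (A j))" for e
    using profile_weight_owners_remove_index[of "{i, j}" j A e]
      profile_weight_owners_remove_index[of "{i}" i A e] \<open>i \<noteq> j\<close>
    by (simp add: insert_Diff_if profile_weight_owners_empty)
  then show ?thesis
    unfolding hdeg_eq_sum_crosses[OF edges] sum_mset.distrib[symmetric] by (rule sum_mset_mono)
qed

lemma sum_profile_weight_le_two_degrees:
  assumes edges: "\<forall>e\<in>#E. e \<subseteq> V" and "finite J" "i \<in> J" "j \<in> J" "i \<noteq> j"
    and core: "\<forall>l\<in>J. T \<subseteq> A l"
    and minimal:
      "\<And>k B. k \<in> J \<Longrightarrow> T \<subseteq> B \<Longrightarrow> B \<subseteq> A k \<Longrightarrow> hdeg V E (A k) \<le> hdeg V E B"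
  shows "(\<Sum>e\<in>#E. profile_weight (owners A J ` e)) \<le> hdeg V E (A i) + hdeg V E (A j)"
proof -
  have "(\<Sum>e\<in>#E. profile_weight (owners A (K \<union> {i, j}) ` e)) \<le> hdeg V E (A i) + hdeg V E (A j)"
    if "finite K" "K \<subseteq> J - {i, j}" for K
    using that
  proof (induction K rule: finite_subset_induct')
    case empty
    then show ?case using sum_profile_weight_pair_le[OF edges \<open>i \<noteq> j\<close>] by simp
  next
    case (insert k K)
    let ?J = "insert k K \<union> {i, j}"
    have "?J \<subseteq> J" "k \<in> J"
      using insert.hyps(2,3) \<open>i \<in> J\<close> \<open>j \<in> J\<close> by auto
    then have "(\<Sum>e\<in>#E. profile_weight (owners A ?J ` e)) \<le> (\<Sum>e\<in>#E. profile_weight (owners A (?J - {k}) ` e))"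
      using insert.hyps(1,2) assms(3-5) core
      by (intro sum_profile_weight_remove_index[OF edges, where T = T]) (auto intro: minimal)
    also have "?J - {k} = K \<union> {i, j}"
      using insert.hyps(2,4) by auto
    finally show ?case
      using insert.IH by simp
  qed
  moreover have "J = (J - {i, j}) \<union> {i, j}"
    using \<open>i \<in> J\<close> \<open>j \<in> J\<close> by auto
  ultimately show ?thesis
    using \<open>finite J\<close> by (metis finite_Diff order_refl)
qed

lemma hdeg_complement: "X \<subseteq> V \<Longrightarrow> hdeg V E (V - X) = hdeg V E X"
  by (simp add: hdeg_def double_diff conj_commute)

lemma min_terminal_cut_le_subset:
  assumes "min_terminal_cut V E S T (V - X)" "X \<subseteq> V" "T \<subseteq> B" "B \<subseteq> X"
  shows "hdeg V E X \<le> hdeg V E B"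
proof -
  have "terminal_cut V S T (V - B)"
    using assms by (auto simp: min_terminal_cut_def terminal_cut_def)
  then have "hdeg V E (V - X) \<le> hdeg V E (V - B)"
    using assms(1) by (simp add: min_terminal_cut_def)
  then show ?thesis
    using assms(2,4) by (simp add: hdeg_complement)
qed

lemma pairwise_Int_eq_overlap:
  fixes A :: "nat \<Rightarrow> 'a set"
  assumes "finite I"
  shows "(\<Union>i\<in>I. \<Union>j\<in>I. if i < j then A i \<inter> A j else {}) = overlap A I"
proof -
  have "2 \<le> card (owners A I v) \<longleftrightarrow> (\<exists>i\<in>I. \<exists>j\<in>I. i < j \<and> v \<in> A i \<and> v \<in> A j)"
    for v
  proof -
    have "2 \<le> card (owners A I v) \<longleftrightarrow> \<not> card (owners A I v) \<le> Suc 0"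
      by linarith
    also have "\<dots> \<longleftrightarrow> (\<exists>i\<in>owners A I v. \<exists>j\<in>owners A I v. i \<noteq> j)"
      using card_le_Suc0_iff_eq[OF finite_owners[OF assms, of A v]] by blast
    also have "\<dots> \<longleftrightarrow> (\<exists>i\<in>I. \<exists>j\<in>I. i < j \<and> v \<in> A i \<and> v \<in> A j)"
      by (auto simp: owners_def neq_iff)
    finally show ?thesis .
  qed
  then show ?thesis
    by (auto simp: overlap_def split: if_splits)
qed

lemma Diff_overlap_eq:
  assumes "finite I" "l \<in> I"
  shows "A l - overlap A I = {v. owners A I v = {l}}"
proof -
  have "l \<in> owners A I v \<and> \<not> 2 \<le> card (owners A I v) \<longleftrightarrow> owners A I v = {l}" for v
    using card_le_Suc0_iff_eq[OF finite_owners[OF assms(1), of A v]]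
    by (auto simp: not_le numeral_2_eq_2 less_Suc_eq_le)
  moreover have "v \<in> A l \<longleftrightarrow> l \<in> owners A I v" for v
    using assms(2) by (simp add: owners_def)
  ultimately show ?thesis
    by (auto simp: overlap_def)
qed

lemma owners_cases:
  assumes "finite I"
  obtains "owners A I v = {}" | l where "l \<in> I" "owners A I v = {l}" | "2 \<le> card (owners A I v)"
proof -
  consider "card (owners A I v) = 0" | "card (owners A I v) = Suc 0" | "2 \<le> card (owners A I v)"
    by linarith
  then show ?thesis
  proof cases
    case 1
    then show ?thesis using that(1) finite_owners[OF assms, of A v] by simp
  next
    case 2
    then obtain l where "owners A I v = {l}" by (auto simp: card_1_singleton_iff)
    moreover have "l \<in> I" using owners_subset calculation by fastforce
    ultimately show ?thesis using that(2) by blast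
  next
    case 3
    then show ?thesis using that(3) by blast
  qed
qed

lemma overlap_subset_UN: "overlap A I \<subseteq> (\<Union>i\<in>I. A i)"
proof
  fix v assume "v \<in> overlap A I"
  then have "owners A I v \<noteq> {}" by (auto simp: overlap_def)
  then show "v \<in> (\<Union>i\<in>I. A i)" by (auto simp: owners_def)
qed

lemma owner_classes_partition:
  assumes "finite I" "I \<noteq> {}" "\<forall>i\<in>I. A i \<subseteq> V"
  defines "Y \<equiv> \<lambda>l. A l - overlap A I" and "W \<equiv> overlap A I" and "Z \<equiv> \<Inter>i\<in>I. V - A i"
  shows "(\<forall>P\<in>Y ` I \<union> {W, Z}. P \<subseteq> V) \<and> \<Union> (Y ` I \<union> {W, Z}) = V
       \<and> (\<forall>i\<in>I. \<forall>j\<in>I. i \<noteq> j \<longrightarrow> Y i \<inter> Y j = {})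
       \<and> (\<forall>i\<in>I. Y i \<inter> W = {} \<and> Y i \<inter> Z = {}) \<and> W \<inter> Z = {}"
proof -
  have Y: "v \<in> Y l \<longleftrightarrow> owners A I v = {l}" if "l \<in> I" for l v
    using Diff_overlap_eq[OF assms(1) that, of A] unfolding Y_def by blast
  have W: "v \<in> W \<longleftrightarrow> 2 \<le> card (owners A I v)" for v
    by (simp add: W_def overlap_def)
  have Z: "v \<in> Z \<longleftrightarrow> v \<in> V \<and> owners A I v = {}" for v
    using \<open>I \<noteq> {}\<close> by (auto simp: Z_def owners_def)
  have "W \<subseteq> V"
    using overlap_subset_UN[of A I] assms(3) unfolding W_def by blast
  then have "\<forall>P\<in>Y ` I \<union> {W, Z}. P \<subseteq> V"
    using assms(2,3) by (auto simp: Y_def Z_def)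
  moreover have "V \<subseteq> \<Union> (Y ` I \<union> {W, Z})"
  proof
    fix v assume "v \<in> V"
    then show "v \<in> \<Union> (Y ` I \<union> {W, Z})"
      by (cases rule: owners_cases[OF assms(1), of A v]) (use Y W Z in auto)
  qed
  moreover have "\<forall>i\<in>I. \<forall>j\<in>I. i \<noteq> j \<longrightarrow> Y i \<inter> Y j = {}"
    using Y by blast
  moreover have "\<forall>i\<in>I. Y i \<inter> W = {} \<and> Y i \<inter> Z = {}"
    using Y W Z by auto
  moreover have "W \<inter> Z = {}"
    using W Z by auto
  ultimately show ?thesis
    by blast
qed

lemma parts_met_append: "parts_met e (Ps @ Qs) = parts_met e Ps + parts_met e Qs"
  by (simp add: parts_met_def)

lemma parts_met_eq_0_iff: "parts_met e Ps = 0 \<longleftrightarrow> (\<forall>P\<in>set Ps. e \<inter> P = {})"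
  by (simp add: parts_met_def filter_empty_conv)

lemma parts_met_map:
  "distinct xs \<Longrightarrow> parts_met e (map Y xs) = card {l \<in> set xs. e \<inter> Y l \<noteq> {}}"
  by (simp add: parts_met_def filter_map o_def distinct_length_filter Int_commute Collect_conj_eq)

lemma sigma_eq_sum_sigma_weight:
  assumes "\<forall>e\<in>#E. e \<subseteq> \<Union> (set Ys) \<union> W \<union> Z" "\<forall>Y\<in>set Ys. Y \<inter> (W \<union> Z) = {}"
  shows "sigma E Ys W Z = (\<Sum>e\<in>#E. sigma_weight (parts_met e Ys) (e \<inter> W \<noteq> {}) (e \<inter> Z \<noteq> {}))"
proof -
  have "e \<subseteq> W \<union> Z \<longleftrightarrow> parts_met e Ys = 0" if "e \<in># E" for e
    unfolding parts_met_eq_0_iff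
  proof
    assume "e \<subseteq> W \<union> Z"
    then show "\<forall>P\<in>set Ys. e \<inter> P = {}" using assms(2) by blast
  next
    assume "\<forall>P\<in>set Ys. e \<inter> P = {}"
    then show "e \<subseteq> W \<union> Z" using assms(1) that by blast
  qed
  then have "of_bool (2 \<le> parts_met e (Ys @ [W, Z]))
      + of_bool (e \<subseteq> W \<union> Z \<and> e \<inter> W \<noteq> {} \<and> e \<inter> Z \<noteq> {})
      + of_bool (e \<inter> Z \<noteq> {} \<and> 2 \<le> parts_met e (Ys @ [W])) + of_bool (e \<inter> Z = {} \<and> 2 \<le> parts_met e Ys)
      = sigma_weight (parts_met e Ys) (e \<inter> W \<noteq> {}) (e \<inter> Z \<noteq> {})" if "e \<in># E" for e
    using that by (simp add: sigma_weight_def parts_met_append) (simp add: parts_met_def)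
  then show ?thesis
    unfolding sigma_def cost_def cost_WZ_def alpha_def beta_def size_filter_mset_eq_sum_of_bool
      sum_mset.distrib[symmetric]
    by (intro arg_cong[where f = sum_mset] image_mset_cong)
qed

lemma singletons_owners_image:
  assumes "finite I"
  shows "{l \<in> I. e \<inter> (A l - overlap A I) \<noteq> {}} = {l. {l} \<in> owners A I ` e}"
proof -
  have "l \<in> I \<and> e \<inter> (A l - overlap A I) \<noteq> {} \<longleftrightarrow> {l} \<in> owners A I ` e" for l
  proof
    assume "l \<in> I \<and> e \<inter> (A l - overlap A I) \<noteq> {}"
    then show "{l} \<in> owners A I ` e"
      using Diff_overlap_eq[OF assms, of l A] by auto
  next
    assume "{l} \<in> owners A I ` e"
    then obtain v where "v \<in> e" "owners A I v = {l}" by auto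
    moreover from this(2) have "l \<in> I" using owners_subset[of A I v] by blast
    ultimately show "l \<in> I \<and> e \<inter> (A l - overlap A I) \<noteq> {}"
      using Diff_overlap_eq[OF assms, of l A] by auto
  qed
  then show ?thesis
    by blast
qed

lemma sigma_weight_eq_profile_weight:
  assumes "finite I" "e \<subseteq> V" "distinct xs" "set xs = I"
  shows "sigma_weight (parts_met e (map (\<lambda>l. A l - overlap A I) xs))
           (e \<inter> overlap A I \<noteq> {}) (e \<inter> (\<Inter>i\<in>I. V - A i) \<noteq> {})
         = profile_weight (owners A I ` e)"
proof -
  have "parts_met e (map (\<lambda>l. A l - overlap A I) xs) = card {l. {l} \<in> owners A I ` e}"
    using assms(3,4) singletons_owners_image[OF assms(1), of e A] by (simp add: parts_met_map)
  moreover have "e \<inter> overlap A I \<noteq> {} \<longleftrightarrow> (\<exists>M\<in>owners A I ` e. 2 \<le> card M)"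
    by (auto simp: overlap_def)
  moreover have "e \<inter> (\<Inter>i\<in>I. V - A i) \<noteq> {} \<longleftrightarrow> {} \<in> owners A I ` e"
  proof -
    have "e \<inter> (\<Inter>i\<in>I. V - A i) = {v \<in> e. owners A I v = {}}"
      using \<open>e \<subseteq> V\<close> by (auto simp: owners_def)
    then show ?thesis
      by auto
  qed
  ultimately show ?thesis
    by (simp add: profile_weight_def)
qed

lemma sigma_eq_sum_profile_weight:
  assumes "finite I" "I \<noteq> {}" "\<forall>i\<in>I. A i \<subseteq> V" and edges: "\<forall>e\<in>#E. e \<subseteq> V"
    and "distinct xs" "set xs = I"
  shows "sigma E (map (\<lambda>l. A l - overlap A I) xs) (overlap A I) (\<Inter>i\<in>I. V - A i)
         = (\<Sum>e\<in>#E. profile_weight (owners A I ` e))"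
proof -
  let ?Y = "\<lambda>l. A l - overlap A I" and ?W = "overlap A I" and ?Z = "\<Inter>i\<in>I. V - A i"
  have "set (map ?Y xs) = ?Y ` I"
    using \<open>set xs = I\<close> by simp
  with owner_classes_partition[OF assms(1-3)] edges
  have "\<forall>e\<in>#E. e \<subseteq> \<Union> (set (map ?Y xs)) \<union> ?W \<union> ?Z"
    and "\<forall>Y\<in>set (map ?Y xs). Y \<inter> (?W \<union> ?Z) = {}"
    by auto
  then have "sigma E (map ?Y xs) ?W ?Z
      = (\<Sum>e\<in>#E. sigma_weight (parts_met e (map ?Y xs)) (e \<inter> ?W \<noteq> {}) (e \<inter> ?Z \<noteq> {}))"
    by (rule sigma_eq_sum_sigma_weight)
  also have "\<dots> = (\<Sum>e\<in>#E. profile_weight (owners A I ` e))"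
    using edges assms(1,5,6)
    by (intro arg_cong[where f = sum_mset] image_mset_cong sigma_weight_eq_profile_weight) auto
  finally show ?thesis .
qed

lemma le_Min_pair_sums:
  fixes f :: "'i \<Rightarrow> nat"
  assumes "finite I" "i0 \<in> I" "j0 \<in> I" "i0 \<noteq> j0"
    and "\<And>i j. i \<in> I \<Longrightarrow> j \<in> I \<Longrightarrow> i \<noteq> j \<Longrightarrow> x \<le> f i + f j"
  shows "x \<le> Min {f i + f j | i j. i \<in> I \<and> j \<in> I \<and> i \<noteq> j}"
proof (rule Min.boundedI)
  show "finite {f i + f j | i j. i \<in> I \<and> j \<in> I \<and> i \<noteq> j}"
    by (rule finite_subset[of _ "(\<lambda>(i, j). f i + f j) ` (I \<times> I)"]) (use assms(1) in auto)
qed (use assms in auto)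

theorem lemma3p4:
  fixes V U R :: "'a set" and E :: "'a set multiset"
    and p :: nat and u :: "nat \<Rightarrow> 'a" and A :: "nat \<Rightarrow> 'a set"
  assumes finV: "finite V"
    and edges: "\<forall>e\<in>#E. e \<subseteq> V"
    and R_ne: "R \<noteq> {}" and RU: "R \<subset> U" and UV: "U \<subset> V"
    and p2: "p \<ge> 2"
    and u_inj: "inj_on u {1..p}"
    and u_in: "u ` {1..p} \<subseteq> U - R"
    and A_sub: "\<forall>i\<in>{1..p}. A i \<subseteq> V"
    and A_cut: "\<forall>i\<in>{1..p}. min_terminal_cut V E ((u ` {1..p} \<union> R) - {u i}) (V - U) (V - A i)"
    and u_A: "\<forall>i\<in>{1..p}. u i \<in> A i - (\<Union>j\<in>{1..p} - {i}. A j)"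
  defines "Z \<equiv> (\<Inter>i\<in>{1..p}. V - A i)"
    and "W \<equiv> (\<Union>i\<in>{1..p}. \<Union>j\<in>{1..p}. if i < j then A i \<inter> A j else {})"
    and "Y \<equiv> (\<lambda>i. A i - (\<Union>k\<in>{1..p}. \<Union>l\<in>{1..p}. if k < l then A k \<inter> A l else {}))"
  shows "(\<forall>P\<in>set (map Y [1..<p+1] @ [W, Z]). P \<subseteq> V)
       \<and> \<Union> (set (map Y [1..<p+1] @ [W, Z])) = V
       \<and> (\<forall>i\<in>{1..p}. \<forall>j\<in>{1..p}. i \<noteq> j \<longrightarrow> Y i \<inter> Y j = {})
       \<and> (\<forall>i\<in>{1..p}. Y i \<inter> W = {} \<and> Y i \<inter> Z = {})
       \<and> W \<inter> Z = {}
       \<and> sigma E (map Y [1..<p+1]) W Z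
           \<le> Min {hdeg V E (A i) + hdeg V E (A j) | i j. i \<in> {1..p} \<and> j \<in> {1..p} \<and> i \<noteq> j}"
proof -
  let ?I = "{1..p}"
  have I: "finite ?I" "?I \<noteq> {}" "distinct [1..<p+1]" "set [1..<p+1] = ?I"
    using p2 by auto
  have W_eq: "W = overlap A ?I" and Y_eq: "Y = (\<lambda>l. A l - overlap A ?I)"
    unfolding W_def Y_def pairwise_Int_eq_overlap[OF I(1)] by simp_all
  have core: "\<forall>l\<in>?I. V - U \<subseteq> A l"
    using A_cut by (auto simp: min_terminal_cut_def terminal_cut_def)
  have minimal: "hdeg V E (A k) \<le> hdeg V E B" if "k \<in> ?I" "V - U \<subseteq> B" "B \<subseteq> A k" for k B
    using min_terminal_cut_le_subset A_cut A_sub that by blast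
  have "sigma E (map Y [1..<p+1]) W Z \<le> hdeg V E (A i) + hdeg V E (A j)"
    if "i \<in> ?I" "j \<in> ?I" "i \<noteq> j" for i j
    using sigma_eq_sum_profile_weight[OF I(1,2) A_sub edges I(3,4)]
      sum_profile_weight_le_two_degrees[OF edges I(1) that core minimal]
    by (simp add: W_eq Y_eq Z_def)
  then have "sigma E (map Y [1..<p+1]) W Z
      \<le> Min {hdeg V E (A i) + hdeg V E (A j) | i j. i \<in> ?I \<and> j \<in> ?I \<and> i \<noteq> j}"
    using p2 by (intro le_Min_pair_sums[OF I(1), of 1 2]) auto
  moreover have "set (map Y [1..<p+1] @ [W, Z]) = Y ` ?I \<union> {W, Z}"
    using I(4) by auto
  ultimately show ?thesis
    using owner_classes_partition[OF I(1,2) A_sub] by (simp add: W_eq Y_eq Z_def)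
qed

end
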